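(* Let $\lambda_1,\lambda_2,\sigma_1,\sigma_2\in\mathbb{C}^*$ and $\eta_1,\eta_2\in\mathbb{C}$. Then $\Omega(\lambda_1,\eta_1,\sigma_1,0)\otimes\Omega(\lambda_2,\eta_2,0,\sigma_2)$ is an irreducible $\mathcal{G}$-module if and only if $\lambda_1\neq\lambda_2$.
   Context: The planar Galilean conformal algebra $\mathcal{G}$ is the complex Lie algebra with basis $\{L_m,H_m,I_m,J_m\mid m\in\mathbb{Z}\}$ and brackets $[L_m,L_n]=(n-m)L_{m+n}$, $[L_m,H_n]=nH_{m+n}$, $[L_m,I_n]=(n-m)I_{m+n}$, $[L_m,J_n]=(n-m)J_{m+n}$, $[H_m,I_n]=I_{m+n}$, $[H_m,J_n]=-J_{m+n}$, and $[H_m,H_n]=[I_m,I_n]=[J_m,J_n]=[I_m,J_n]=0$ for all $m,n\in\mathbb{Z}$. For $\lambda,\sigma\in\mathbb{C}^*$, $\eta\in\mathbb{C}$, the module $\Omega(\lambda,\eta,\sigma,0)$ is $\mathbb{C}[X,Y]$ with $L_m f(X,Y)=\lambda^m(Y-mX+m\eta)f(X,Y-m)$, $H_m f(X,Y)=\lambda^m X f(X,Y-m)$, $I_m f(X,Y)=\lambda^m\sigma f(X-1,Y-m)$, $J_m f(X,Y)=0$. The module $\Omega(\lambda,\eta,0,\sigma)$ is $\mathbb{C}[S,T]$ with $L_m f(S,T)=\lambda^m(T+mS+m\eta)f(S,T-m)$, $H_m f(S,T)=\lambda^m S f(S,T-m)$, $I_m f(S,T)=0$, $J_m f(S,T)=\lambda^m\sigma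 f(S+1,T-m)$. The tensor product of $\mathcal{G}$-modules has action $x(v\otimes w)=xv\otimes w+v\otimes xw$. *)

theory Defs
  imports Complex_Main
begin

text \<open>Basis elements of the planar Galilean conformal algebra G.\<close>
datatype gca = L int | H int | I int | J int

type_synonym fun2 = "complex \<Rightarrow> complex \<Rightarrow> complex"
type_synonym fun4 = "complex \<Rightarrow> complex \<Rightarrow> complex \<Rightarrow> complex \<Rightarrow> complex"

text \<open>Polynomials in two variables, realised as polynomial functions C^2 -> C
  (C is infinite, so this is isomorphic to C[X,Y]).\<close>
definition poly2 :: "fun2 set" where
  "poly2 = {f. \<exists>c :: nat \<times> nat \<Rightarrow> complex. finite {k. c k \<noteq> 0} \<and>
      (\<forall>x y. f x y = (\<Sum>k\<in>{k. c k \<noteq> 0}. c k * x ^ fst k * y ^ snd k))}"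

text \<open>Polynomials in four variables X,Y,S,T (a model of C[X,Y] (x) C[S,T]).\<close>
definition poly4 :: "fun4 set" where
  "poly4 = {F. \<exists>c :: nat \<times> nat \<times> nat \<times> nat \<Rightarrow> complex. finite {k. c k \<noteq> 0} \<and>
      (\<forall>x y s t. F x y s t = (\<Sum>k\<in>{k. c k \<noteq> 0}.
          c k * x ^ fst k * y ^ fst (snd k) * s ^ fst (snd (snd k)) * t ^ snd (snd (snd k))))}"

text \<open>The module Omega(lambda, eta, sigma, 0) on C[X,Y].\<close>
fun omegaI :: "complex \<Rightarrow> complex \<Rightarrow> complex \<Rightarrow> gca \<Rightarrow> fun2 \<Rightarrow> fun2" where
  "omegaI lam eta sig (L m) f = (\<lambda>X Y. lam powi m * (Y - of_int m * X + of_int m * eta) * f X (Y - of_int m))"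
| "omegaI lam eta sig (H m) f = (\<lambda>X Y. lam powi m * X * f X (Y - of_int m))"
| "omegaI lam eta sig (I m) f = (\<lambda>X Y. lam powi m * sig * f (X - 1) (Y - of_int m))"
| "omegaI lam eta sig (J m) f = (\<lambda>X Y. 0)"

text \<open>The module Omega(lambda, eta, 0, sigma) on C[S,T].\<close>
fun omegaJ :: "complex \<Rightarrow> complex \<Rightarrow> complex \<Rightarrow> gca \<Rightarrow> fun2 \<Rightarrow> fun2" where
  "omegaJ lam eta sig (L m) f = (\<lambda>S T. lam powi m * (T + of_int m * S + of_int m * eta) * f S (T - of_int m))"
| "omegaJ lam eta sig (H m) f = (\<lambda>S T. lam powi m * S * f S (T - of_int m))"
| "omegaJ lam eta sig (I m) f = (\<lambda>S T. 0)"
| "omegaJ lam eta sig (J m) f = (\<lambda>S T. lam powi m * sig * f (S + 1) (T - of_int m))"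

text \<open>Tensor product action on C[X,Y] (x) C[S,T] = C[X,Y,S,T]:
  x(f (x) g) = xf (x) g + f (x) xg, i.e. the first module acts on the variables X,Y
  and the second on S,T.\<close>
definition tensor_act :: "(gca \<Rightarrow> fun2 \<Rightarrow> fun2) \<Rightarrow> (gca \<Rightarrow> fun2 \<Rightarrow> fun2) \<Rightarrow> gca \<Rightarrow> fun4 \<Rightarrow> fun4" where
  "tensor_act A B g F = (\<lambda>x y s t. A g (\<lambda>x' y'. F x' y' s t) x y + B g (\<lambda>s' t'. F x y s' t') s t)"

definition csubspace4 :: "fun4 set \<Rightarrow> bool" where
  "csubspace4 W \<longleftrightarrow> (\<lambda>x y s t. 0) \<in> W \<and>
     (\<forall>F\<in>W. \<forall>G\<in>W. (\<lambda>x y s t. F x y s t + G x y s t) \<in> W) \<and>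
     (\<forall>c. \<forall>F\<in>W. (\<lambda>x y s t. c * F x y s t) \<in> W)"

text \<open>A module V (with action of the basis elements, hence of all of G by linearity)
  is irreducible: nonzero and the only G-submodules are 0 and V.\<close>
definition irreducible_mod4 :: "fun4 set \<Rightarrow> (gca \<Rightarrow> fun4 \<Rightarrow> fun4) \<Rightarrow> bool" where
  "irreducible_mod4 V act \<longleftrightarrow> V \<noteq> {\<lambda>x y s t. 0} \<and>
     (\<forall>W. W \<subseteq> V \<and> csubspace4 W \<and> (\<forall>g. \<forall>F\<in>W. act g F \<in> W) \<longrightarrow>
          W = {\<lambda>x y s t. 0} \<or> W = V)"

end

theory Submission
  imports Defs "HOL-Computational_Algebra.Polynomial"
begin

text \<open>
  Up to nonzero scalars, \<open>I\<^sub>0, I\<^sub>1, J\<^sub>0, J\<^sub>1\<close> act by the translations \<open>x \<mapsto> x - 1\<close>,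
  \<open>(x, y) \<mapsto> (x - 1, y - 1)\<close>, \<open>s \<mapsto> s + 1\<close> and \<open>(s, t) \<mapsto> (s + 1, t - 1)\<close>. So a nonzero
  submodule contains, with \<open>F\<close>, the differences \<open>F(\<cdot> + v) - F\<close> along these translations, which have
  lower total degree; a polynomial fixed by all four translations is periodic in every variable, hence
  constant. By induction on the degree, every nonzero submodule contains \<open>1\<close>.

  If \<open>\<lambda>\<^sub>1 \<noteq> \<lambda>\<^sub>2\<close>, then \<open>H\<^sub>1 - \<lambda>\<^sub>2 H\<^sub>0\<close> and \<open>L\<^sub>1 - \<lambda>\<^sub>2 L\<^sub>0\<close> act as multiplication by
  \<open>(\<lambda>\<^sub>1 - \<lambda>\<^sub>2) x\<close> and \<open>(\<lambda>\<^sub>1 - \<lambda>\<^sub>2) y\<close> up to terms that are already known to lie in the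
  submodule by induction on the degree in \<open>y, t\<close>; together with \<open>H\<^sub>0 = x + s\<close> and
  \<open>L\<^sub>0 = y + t\<close> this generates every polynomial from \<open>1\<close>. If \<open>\<lambda>\<^sub>1 = \<lambda>\<^sub>2\<close>, the
  polynomials depending on \<open>y\<close> and \<open>t\<close> only through \<open>y + t\<close> form a proper nonzero submodule.
\<close>

section \<open>Polynomial functions in four variables\<close>

definition monomial4 :: "nat \<times> nat \<times> nat \<times> nat \<Rightarrow> fun4" where
  "monomial4 k x y s t = x ^ fst k * y ^ fst (snd k) * s ^ fst (snd (snd k)) * t ^ snd (snd (snd k))"

lemma monomial4_mult:
  "monomial4 (a1, a2, a3, a4) x y s t * monomial4 (b1, b2, b3, b4) x y s t
     = monomial4 (a1 + b1, a2 + b2, a3 + b3, a4 + b4) x y s t"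
  by (simp add: monomial4_def power_add mult_ac)

lemma poly4I:
  assumes "finite A" and "\<And>x y s t. F x y s t = (\<Sum>k\<in>A. c k * monomial4 k x y s t)"
  shows "F \<in> poly4"
proof -
  let ?c = "\<lambda>k. if k \<in> A then c k else 0"
  have supp: "{k. ?c k \<noteq> 0} \<subseteq> A" by auto
  have "F x y s t = (\<Sum>k\<in>{k. ?c k \<noteq> 0}. ?c k * monomial4 k x y s t)" for x y s t
    unfolding assms(2) using assms(1) supp by (intro sum.mono_neutral_cong_right) auto
  then show ?thesis
    unfolding poly4_def monomial4_def using finite_subset[OF supp assms(1)]
    by (intro CollectI exI[of _ ?c]) (simp add: mult.assoc)
qed

lemma poly4E:
  assumes "F \<in> poly4"
  obtains A c where "finite A" and "\<And>x y s t. F x y s t = (\<Sum>k\<in>A. c k * monomial4 k x y s t)"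
proof -
  from assms obtain c where "finite {k. c k \<noteq> 0}" and "\<forall>x y s t. F x y s t = (\<Sum>k\<in>{k. c k \<noteq> 0}.
      c k * x ^ fst k * y ^ fst (snd k) * s ^ fst (snd (snd k)) * t ^ snd (snd (snd k)))"
    unfolding poly4_def by blast
  then show thesis
    by (intro that[of "{k. c k \<noteq> 0}" c]) (simp_all add: monomial4_def mult.assoc)
qed

lemma poly4_monomial_sum:
  assumes "finite K"
  shows "(\<lambda>x y s t. \<Sum>i\<in>K. a i * monomial4 (e i) x y s t) \<in> poly4"
proof (rule poly4I)
  show "(\<Sum>i\<in>K. a i * monomial4 (e i) x y s t)
      = (\<Sum>k\<in>e ` K. (\<Sum>i\<in>{i \<in> K. e i = k}. a i) * monomial4 k x y s t)" for x y s t
  proof -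
    have "(\<Sum>k\<in>e ` K. (\<Sum>i\<in>{i \<in> K. e i = k}. a i) * monomial4 k x y s t)
        = (\<Sum>k\<in>e ` K. \<Sum>i\<in>{i \<in> K. e i = k}. a i * monomial4 (e i) x y s t)"
      by (simp add: sum_distrib_right)
    also have "\<dots> = (\<Sum>i\<in>K. a i * monomial4 (e i) x y s t)"
      using assms by (intro sum.group) auto
    finally show ?thesis ..
  qed
qed (use assms in simp)

lemma poly4_add:
  assumes "F \<in> poly4" "G \<in> poly4"
  shows "(\<lambda>x y s t. F x y s t + G x y s t) \<in> poly4"
proof -
  obtain A c where A: "finite A" "\<And>x y s t. F x y s t = (\<Sum>k\<in>A. c k * monomial4 k x y s t)"
    using poly4E[OF assms(1)] by blast
  obtain B d where B: "finite B" "\<And>x y s t. G x y s t = (\<Sum>k\<in>B. d k * monomial4 k x y s t)"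
    using poly4E[OF assms(2)] by blast
  have "F x y s t + G x y s t
      = (\<Sum>i\<in>A <+> B. case_sum c d i * monomial4 (case_sum id id i) x y s t)" for x y s t
    using A B by (simp add: sum.Plus)
  then show ?thesis
    using poly4_monomial_sum[of "A <+> B"] A B by simp
qed

lemma poly4_mult:
  assumes "F \<in> poly4" "G \<in> poly4"
  shows "(\<lambda>x y s t. F x y s t * G x y s t) \<in> poly4"
proof -
  obtain A c where A: "finite A" "\<And>x y s t. F x y s t = (\<Sum>k\<in>A. c k * monomial4 k x y s t)"
    using poly4E[OF assms(1)] by blast
  obtain B d where B: "finite B" "\<And>x y s t. G x y s t = (\<Sum>k\<in>B. d k * monomial4 k x y s t)"
    using poly4E[OF assms(2)] by blast
  define exp_sum :: "(nat \<times> nat \<times> nat \<times> nat) \<times> (nat \<times> nat \<times> nat \<times> nat) \<Rightarrow> nat \<times> nat \<times> nat \<times> nat"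
    where "exp_sum = (\<lambda>((a1, a2, a3, a4), (b1, b2, b3, b4)). (a1 + b1, a2 + b2, a3 + b3, a4 + b4))"
  have "F x y s t * G x y s t
      = (\<Sum>p\<in>A \<times> B. (c (fst p) * d (snd p)) * monomial4 (exp_sum p) x y s t)" for x y s t
    unfolding A B sum_product sum.cartesian_product
    by (intro sum.cong refl) (auto simp: exp_sum_def monomial4_mult[symmetric] mult_ac)
  then show ?thesis
    using poly4_monomial_sum[of "A \<times> B"] A B by simp
qed

inductive polyfun4 :: "fun4 \<Rightarrow> bool" where
  const: "polyfun4 (\<lambda>x y s t. c)"
| var_x: "polyfun4 (\<lambda>x y s t. x)"
| var_y: "polyfun4 (\<lambda>x y s t. y)"
| var_s: "polyfun4 (\<lambda>x y s t. s)"
| var_t: "polyfun4 (\<lambda>x y s t. t)"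
| add: "polyfun4 F \<Longrightarrow> polyfun4 G \<Longrightarrow> polyfun4 (\<lambda>x y s t. F x y s t + G x y s t)"
| mult: "polyfun4 F \<Longrightarrow> polyfun4 G \<Longrightarrow> polyfun4 (\<lambda>x y s t. F x y s t * G x y s t)"

lemma poly4_monomial: "(\<lambda>x y s t. c * monomial4 k x y s t) \<in> poly4"
  using poly4_monomial_sum[of "{()}" "\<lambda>_. c" "\<lambda>_. k"] by simp

lemma polyfun4_imp_poly4: "polyfun4 F \<Longrightarrow> F \<in> poly4"
proof (induction rule: polyfun4.induct)
  case (const c)
  show ?case using poly4_monomial[of c "(0, 0, 0, 0)"] by (simp add: monomial4_def)
next
  case var_x
  show ?case using poly4_monomial[of 1 "(1, 0, 0, 0)"] by (simp add: monomial4_def)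
next
  case var_y
  show ?case using poly4_monomial[of 1 "(0, 1, 0, 0)"] by (simp add: monomial4_def)
next
  case var_s
  show ?case using poly4_monomial[of 1 "(0, 0, 1, 0)"] by (simp add: monomial4_def)
next
  case var_t
  show ?case using poly4_monomial[of 1 "(0, 0, 0, 1)"] by (simp add: monomial4_def)
next
  case (add F G) show ?case by (rule poly4_add[OF add.IH])
next
  case (mult F G) show ?case by (rule poly4_mult[OF mult.IH])
qed

lemma polyfun4_sum:
  "finite A \<Longrightarrow> (\<And>k. k \<in> A \<Longrightarrow> polyfun4 (F k)) \<Longrightarrow> polyfun4 (\<lambda>x y s t. \<Sum>k\<in>A. F k x y s t)"
proof (induction A rule: finite_induct)
  case empty
  show ?case using polyfun4.const[of 0] by simp
next
  case (insert a A)
  have "polyfun4 (\<lambda>x y s t. F a x y s t + (\<Sum>k\<in>A. F k x y s t))"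
    using insert by (intro polyfun4.add) auto
  then show ?case using insert(1,2) by simp
qed

lemma polyfun4_power: "polyfun4 F \<Longrightarrow> polyfun4 (\<lambda>x y s t. F x y s t ^ n)"
proof (induction n)
  case 0
  show ?case using polyfun4.const[of 1] by simp
next
  case (Suc n)
  then show ?case using polyfun4.mult[of F "\<lambda>x y s t. F x y s t ^ n"] by simp
qed

lemma poly4_imp_polyfun4: "F \<in> poly4 \<Longrightarrow> polyfun4 F"
proof -
  assume "F \<in> poly4"
  then obtain A c where "finite A" and F: "\<And>x y s t. F x y s t = (\<Sum>k\<in>A. c k * monomial4 k x y s t)"
    using poly4E by blast
  have "polyfun4 (\<lambda>x y s t. \<Sum>k\<in>A. c k * monomial4 k x y s t)"
    unfolding monomial4_def using \<open>finite A\<close>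
    by (intro polyfun4_sum polyfun4.mult polyfun4.const polyfun4_power
        polyfun4.var_x polyfun4.var_y polyfun4.var_s polyfun4.var_t)
  moreover have "F = (\<lambda>x y s t. \<Sum>k\<in>A. c k * monomial4 k x y s t)"
    using F by (intro ext) simp
  ultimately show ?thesis by simp
qed

lemma poly4_iff_polyfun4: "F \<in> poly4 \<longleftrightarrow> polyfun4 F"
  using poly4_imp_polyfun4 polyfun4_imp_poly4 by blast

lemma polyfun4_translate:
  "polyfun4 F \<Longrightarrow> polyfun4 (\<lambda>x y s t. F (x + a) (y + b) (s + c) (t + d))"
proof (induction rule: polyfun4.induct)
  case var_x show ?case using polyfun4.add[OF polyfun4.var_x polyfun4.const] .
next
  case var_y show ?case using polyfun4.add[OF polyfun4.var_y polyfun4.const] .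
next
  case var_s show ?case using polyfun4.add[OF polyfun4.var_s polyfun4.const] .
next
  case var_t show ?case using polyfun4.add[OF polyfun4.var_t polyfun4.const] .
next
  case (const c) show ?case by (rule polyfun4.const)
next
  case (add F G) show ?case by (rule polyfun4.add[OF add.IH])
next
  case (mult F G) show ?case by (rule polyfun4.mult[OF mult.IH])
qed

lemma polyfun4_times_translate:
  "polyfun4 P \<Longrightarrow> polyfun4 F \<Longrightarrow>
     polyfun4 (\<lambda>x y s t. P x y s t * F (x + a) (y + b) (s + c) (t + d))"
  by (rule polyfun4.mult[OF _ polyfun4_translate])

lemma polyfun4_restrict_to_line:
  assumes "polyfun4 F"
  shows "\<exists>p. \<forall>z. F (a1 + z * b1) (a2 + z * b2) (a3 + z * b3) (a4 + z * b4) = poly p z"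
  using assms
proof (induction rule: polyfun4.induct)
  case (const c) show ?case by (intro exI[of _ "[:c:]"]) simp
next
  case var_x show ?case by (intro exI[of _ "[:a1, b1:]"]) (simp add: mult.commute)
next
  case var_y show ?case by (intro exI[of _ "[:a2, b2:]"]) (simp add: mult.commute)
next
  case var_s show ?case by (intro exI[of _ "[:a3, b3:]"]) (simp add: mult.commute)
next
  case var_t show ?case by (intro exI[of _ "[:a4, b4:]"]) (simp add: mult.commute)
next
  case (add F G)
  then obtain p q where "\<forall>z. F (a1 + z * b1) (a2 + z * b2) (a3 + z * b3) (a4 + z * b4) = poly p z"
    and "\<forall>z. G (a1 + z * b1) (a2 + z * b2) (a3 + z * b3) (a4 + z * b4) = poly q z" by blast
  then show ?case by (intro exI[of _ "p + q"]) simp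
next
  case (mult F G)
  then obtain p q where "\<forall>z. F (a1 + z * b1) (a2 + z * b2) (a3 + z * b3) (a4 + z * b4) = poly p z"
    and "\<forall>z. G (a1 + z * b1) (a2 + z * b2) (a3 + z * b3) (a4 + z * b4) = poly q z" by blast
  then show ?case by (intro exI[of _ "p * q"]) simp
qed

lemma poly_periodic_const:
  fixes p :: "complex poly"
  assumes "\<And>z. poly p (z + 1) = poly p z"
  shows "poly p z = poly p 0"
proof -
  have "poly p (of_nat n) = poly p 0" for n
    by (induction n) (use assms[of "of_nat _"] in \<open>simp_all add: add.commute\<close>)
  then have "range (of_nat :: nat \<Rightarrow> complex) \<subseteq> {z. poly (p - [:poly p 0:]) z = 0}"
    by auto
  moreover have "infinite (range (of_nat :: nat \<Rightarrow> complex))"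
    using inj_of_nat range_inj_infinite by blast
  ultimately have "p - [:poly p 0:] = 0"
    using poly_roots_finite finite_subset by blast
  then have "poly (p - [:poly p 0:]) z = 0"
    by simp
  then show ?thesis
    by simp
qed

lemma polyfun4_periodic_line:
  assumes "polyfun4 F"
    and "\<And>z. F (a1 + (z + 1) * b1) (a2 + (z + 1) * b2) (a3 + (z + 1) * b3) (a4 + (z + 1) * b4)
           = F (a1 + z * b1) (a2 + z * b2) (a3 + z * b3) (a4 + z * b4)"
  shows "F (a1 + z * b1) (a2 + z * b2) (a3 + z * b3) (a4 + z * b4) = F a1 a2 a3 a4"
proof -
  obtain p where p: "\<And>z. F (a1 + z * b1) (a2 + z * b2) (a3 + z * b3) (a4 + z * b4) = poly p z"
    using polyfun4_restrict_to_line[OF assms(1)] by blast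
  have "poly p z = poly p 0"
    by (rule poly_periodic_const) (use assms(2) in \<open>simp add: p[symmetric]\<close>)
  then show ?thesis using p[of z] p[of 0] by simp
qed

lemma polyfun4_periodic_const:
  assumes "polyfun4 F"
    and "\<And>x y s t. F (x + 1) y s t = F x y s t" "\<And>x y s t. F x (y + 1) s t = F x y s t"
    and "\<And>x y s t. F x y (s + 1) t = F x y s t" "\<And>x y s t. F x y s (t + 1) = F x y s t"
  shows "F x y s t = F 0 0 0 0"
proof -
  have "F x y s t = F 0 y s t"
    using polyfun4_periodic_line[OF assms(1), of 0 1 y 0 s 0 t 0 x] assms(2) by simp
  also have "\<dots> = F 0 0 s t"
    using polyfun4_periodic_line[OF assms(1), of 0 0 0 1 s 0 t 0 y] assms(3) by simp
  also have "\<dots> = F 0 0 0 t"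
    using polyfun4_periodic_line[OF assms(1), of 0 0 0 0 0 1 t 0 s] assms(4) by simp
  also have "\<dots> = F 0 0 0 0"
    using polyfun4_periodic_line[OF assms(1), of 0 0 0 0 0 0 0 1 t] assms(5) by simp
  finally show ?thesis .
qed

section \<open>Weighted degree\<close>

text \<open>For \<open>w = 1\<close> this bounds the total degree, for \<open>w = 0\<close> the degree in \<open>y\<close> and \<open>t\<close> alone.\<close>
inductive wdeg_le :: "nat \<Rightarrow> nat \<Rightarrow> fun4 \<Rightarrow> bool" for w where
  const: "wdeg_le w n (\<lambda>x y s t. c)"
| times_x: "wdeg_le w n F \<Longrightarrow> wdeg_le w (n + w) (\<lambda>x y s t. x * F x y s t)"
| times_s: "wdeg_le w n F \<Longrightarrow> wdeg_le w (n + w) (\<lambda>x y s t. s * F x y s t)"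
| times_y: "wdeg_le w n F \<Longrightarrow> wdeg_le w (Suc n) (\<lambda>x y s t. y * F x y s t)"
| times_t: "wdeg_le w n F \<Longrightarrow> wdeg_le w (Suc n) (\<lambda>x y s t. t * F x y s t)"
| add: "wdeg_le w n F \<Longrightarrow> wdeg_le w n G \<Longrightarrow> wdeg_le w n (\<lambda>x y s t. F x y s t + G x y s t)"
| Suc: "wdeg_le w n F \<Longrightarrow> wdeg_le w (Suc n) F"

lemma wdeg_le_cong: "wdeg_le w n F \<Longrightarrow> (\<And>x y s t. F x y s t = G x y s t) \<Longrightarrow> wdeg_le w n G"
proof -
  assume "wdeg_le w n F" and "\<And>x y s t. F x y s t = G x y s t"
  then show ?thesis by (metis ext)
qed

lemma wdeg_le_mono: "wdeg_le w n F \<Longrightarrow> n \<le> m \<Longrightarrow> wdeg_le w m F"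
  by (induction m) (auto simp: le_Suc_eq intro: wdeg_le.Suc)

lemma wdeg_le_scale: "wdeg_le w n F \<Longrightarrow> wdeg_le w n (\<lambda>x y s t. a * F x y s t)"
proof (induction rule: wdeg_le.induct)
  case (const n c) show ?case by (rule wdeg_le.const)
next
  case (times_x n F) show ?case
    by (rule wdeg_le_cong[OF wdeg_le.times_x[OF times_x.IH]]) (simp add: mult.left_commute)
next
  case (times_s n F) show ?case
    by (rule wdeg_le_cong[OF wdeg_le.times_s[OF times_s.IH]]) (simp add: mult.left_commute)
next
  case (times_y n F) show ?case
    by (rule wdeg_le_cong[OF wdeg_le.times_y[OF times_y.IH]]) (simp add: mult.left_commute)
next
  case (times_t n F) show ?case
    by (rule wdeg_le_cong[OF wdeg_le.times_t[OF times_t.IH]]) (simp add: mult.left_commute)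
next
  case (add n F G) show ?case
    by (rule wdeg_le_cong[OF wdeg_le.add[OF add.IH]]) (simp add: distrib_left)
next
  case (Suc n F) show ?case by (rule wdeg_le.Suc[OF Suc.IH])
qed

lemma wdeg_le_translate:
  "wdeg_le w n F \<Longrightarrow> wdeg_le w n (\<lambda>x y s t. F (x + a) (y + b) (s + c) (t + d))"
proof (induction rule: wdeg_le.induct)
  case (const n c) show ?case by (rule wdeg_le.const)
next
  case (times_x n F)
  have "wdeg_le w (n + w) (\<lambda>x y s t. x * F (x + a) (y + b) (s + c) (t + d)
      + a * F (x + a) (y + b) (s + c) (t + d))"
    by (intro wdeg_le.add wdeg_le.times_x times_x.IH wdeg_le_mono[OF wdeg_le_scale[OF times_x.IH]]) simp
  then show ?case by (rule wdeg_le_cong) (simp add: distrib_right)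
next
  case (times_s n F)
  have "wdeg_le w (n + w) (\<lambda>x y s t. s * F (x + a) (y + b) (s + c) (t + d)
      + c * F (x + a) (y + b) (s + c) (t + d))"
    by (intro wdeg_le.add wdeg_le.times_s times_s.IH wdeg_le_mono[OF wdeg_le_scale[OF times_s.IH]]) simp
  then show ?case by (rule wdeg_le_cong) (simp add: distrib_right)
next
  case (times_y n F)
  have "wdeg_le w (Suc n) (\<lambda>x y s t. y * F (x + a) (y + b) (s + c) (t + d)
      + b * F (x + a) (y + b) (s + c) (t + d))"
    by (intro wdeg_le.add wdeg_le.times_y times_y.IH wdeg_le.Suc wdeg_le_scale)
  then show ?case by (rule wdeg_le_cong) (simp add: distrib_right)
next
  case (times_t n F)
  have "wdeg_le w (Suc n) (\<lambda>x y s t. t * F (x + a) (y + b) (s + c) (t + d)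
      + d * F (x + a) (y + b) (s + c) (t + d))"
    by (intro wdeg_le.add wdeg_le.times_t times_t.IH wdeg_le.Suc wdeg_le_scale)
  then show ?case by (rule wdeg_le_cong) (simp add: distrib_right)
next
  case (add n F G) show ?case by (rule wdeg_le.add[OF add.IH])
next
  case (Suc n F) show ?case by (rule wdeg_le.Suc[OF Suc.IH])
qed

lemma wdeg_le_mult:
  "wdeg_le w n F \<Longrightarrow> wdeg_le w m G \<Longrightarrow> wdeg_le w (n + m) (\<lambda>x y s t. F x y s t * G x y s t)"
proof (induction rule: wdeg_le.induct)
  case (const n c)
  show ?case by (rule wdeg_le_mono[OF wdeg_le_scale[OF const]]) simp
next
  case (times_x n F)
  have "wdeg_le w (n + w + m) (\<lambda>x y s t. x * (F x y s t * G x y s t))"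
    using wdeg_le.times_x[OF times_x.IH[OF times_x.prems]] by (simp add: ac_simps)
  then show ?case by (rule wdeg_le_cong) (simp add: mult.assoc)
next
  case (times_s n F)
  have "wdeg_le w (n + w + m) (\<lambda>x y s t. s * (F x y s t * G x y s t))"
    using wdeg_le.times_s[OF times_s.IH[OF times_s.prems]] by (simp add: ac_simps)
  then show ?case by (rule wdeg_le_cong) (simp add: mult.assoc)
next
  case (times_y n F)
  have "wdeg_le w (Suc (n + m)) (\<lambda>x y s t. y * (F x y s t * G x y s t))"
    by (rule wdeg_le.times_y[OF times_y.IH[OF times_y.prems]])
  then show ?case by (simp add: mult.assoc)
next
  case (times_t n F)
  have "wdeg_le w (Suc (n + m)) (\<lambda>x y s t. t * (F x y s t * G x y s t))"
    by (rule wdeg_le.times_t[OF times_t.IH[OF times_t.prems]])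
  then show ?case by (simp add: mult.assoc)
next
  case (add n F1 F2)
  have "wdeg_le w (n + m) (\<lambda>x y s t. F1 x y s t * G x y s t + F2 x y s t * G x y s t)"
    by (rule wdeg_le.add[OF add.IH[OF add.prems]])
  then show ?case by (rule wdeg_le_cong) (simp add: distrib_right)
next
  case (Suc n F)
  show ?case using wdeg_le.Suc[OF Suc.IH[OF Suc.prems]] by simp
qed

lemma polyfun4_imp_wdeg_le: "polyfun4 F \<Longrightarrow> \<exists>n. wdeg_le w n F"
proof (induction rule: polyfun4.induct)
  case (const c) show ?case using wdeg_le.const by blast
next
  case var_x show ?case using wdeg_le.times_x[OF wdeg_le.const[of w 0 1]] by auto
next
  case var_y show ?case using wdeg_le.times_y[OF wdeg_le.const[of w 0 1]] by auto
next
  case var_s show ?case using wdeg_le.times_s[OF wdeg_le.const[of w 0 1]] by auto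
next
  case var_t show ?case using wdeg_le.times_t[OF wdeg_le.const[of w 0 1]] by auto
next
  case (add F G)
  then obtain n m where "wdeg_le w n F" "wdeg_le w m G" by blast
  then have "wdeg_le w (max n m) F" "wdeg_le w (max n m) G" by (auto intro: wdeg_le_mono)
  then show ?case using wdeg_le.add by blast
next
  case (mult F G)
  then show ?case using wdeg_le_mult by blast
qed

lemma wdeg_le_imp_polyfun4: "wdeg_le w n F \<Longrightarrow> polyfun4 F"
  by (induction rule: wdeg_le.induct)
     (auto intro: polyfun4.const polyfun4.add polyfun4.mult[OF polyfun4.var_x]
        polyfun4.mult[OF polyfun4.var_y] polyfun4.mult[OF polyfun4.var_s] polyfun4.mult[OF polyfun4.var_t])

lemma wdeg_le_0_translate_invariant:
  assumes "wdeg_le w 0 F" and "w = 0 \<Longrightarrow> a = 0 \<and> c = 0"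
  shows "F (x + a) (y + b) (s + c) (t + d) = F x y s t"
proof -
  have "wdeg_le w n F \<Longrightarrow> n = 0 \<Longrightarrow> F (x + a) (y + b) (s + c) (t + d) = F x y s t" for n F
    by (induction rule: wdeg_le.induct) (use assms(2) in auto)
  then show ?thesis using assms(1) by blast
qed

text \<open>Product rule: \<open>\<Delta>(u F) = u \<Delta>F + e F(\<cdot> + v)\<close> when translation by \<open>v\<close> adds \<open>e\<close> to the coordinate \<open>u\<close>.\<close>
lemma wdeg_le_diff_times_coord:
  assumes F: "wdeg_le w n F"
    and dF: "wdeg_le w (n - 1) (\<lambda>x y s t. F (x + a) (y + b) (s + c) (t + d) - F x y s t)"
    and side: "w = 0 \<Longrightarrow> a = 0 \<and> c = 0"
    and u_mult: "\<And>k G. wdeg_le w k G \<Longrightarrow> wdeg_le w (k + v) (\<lambda>x y s t. u x y s t * G x y s t)"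
    and u_translate: "\<And>x y s t. u (x + a) (y + b) (s + c) (t + d) = u x y s t + e"
    and e: "v = 0 \<Longrightarrow> e = 0"
  shows "wdeg_le w (n + v - 1) (\<lambda>x y s t. u (x + a) (y + b) (s + c) (t + d) * F (x + a) (y + b) (s + c) (t + d)
           - u x y s t * F x y s t)"
proof -
  have diff: "wdeg_le w (n + v - 1) (\<lambda>x y s t. u x y s t * (F (x + a) (y + b) (s + c) (t + d) - F x y s t))"
  proof (cases "n = 0")
    case True
    then show ?thesis
      using wdeg_le_0_translate_invariant[OF F[unfolded True] side]
      by (intro wdeg_le_cong[OF wdeg_le.const[of w _ 0]]) simp
  next
    case False
    then show ?thesis using u_mult[OF dF] by simp
  qed
  have rest: "wdeg_le w (n + v - 1) (\<lambda>x y s t. e * F (x + a) (y + b) (s + c) (t + d))"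
  proof (cases "v = 0")
    case True
    then show ?thesis using e by (intro wdeg_le_cong[OF wdeg_le.const[of w _ 0]]) simp
  next
    case False
    then show ?thesis by (intro wdeg_le_mono[OF wdeg_le_scale[OF wdeg_le_translate[OF F]]]) simp
  qed
  show ?thesis
    by (rule wdeg_le_cong[OF wdeg_le.add[OF diff rest]]) (simp add: u_translate algebra_simps)
qed

lemma wdeg_le_diff:
  "wdeg_le w n F \<Longrightarrow> (w = 0 \<Longrightarrow> a = 0 \<and> c = 0) \<Longrightarrow>
     wdeg_le w (n - 1) (\<lambda>x y s t. F (x + a) (y + b) (s + c) (t + d) - F x y s t)"
proof (induction rule: wdeg_le.induct)
  case (const n c')
  show ?case by (rule wdeg_le_cong[OF wdeg_le.const[of w _ 0]]) simp
next
  case (times_x n F)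
  show ?case
    by (rule wdeg_le_diff_times_coord[where u = "\<lambda>x y s t. x" and e = a])
       (use times_x in \<open>auto intro: wdeg_le.times_x\<close>)
next
  case (times_s n F)
  show ?case
    by (rule wdeg_le_diff_times_coord[where u = "\<lambda>x y s t. s" and e = c])
       (use times_s in \<open>auto intro: wdeg_le.times_s\<close>)
next
  case (times_y n F)
  have "wdeg_le w (n + 1 - 1) (\<lambda>x y s t. (y + b) * F (x + a) (y + b) (s + c) (t + d) - y * F x y s t)"
    by (rule wdeg_le_diff_times_coord[where u = "\<lambda>x y s t. y"])
       (use times_y in \<open>auto intro: wdeg_le.times_y\<close>)
  then show ?case by simp
next
  case (times_t n F)
  have "wdeg_le w (n + 1 - 1) (\<lambda>x y s t. (t + d) * F (x + a) (y + b) (s + c) (t + d) - t * F x y s t)"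
    by (rule wdeg_le_diff_times_coord[where u = "\<lambda>x y s t. t"])
       (use times_t in \<open>auto intro: wdeg_le.times_t\<close>)
  then show ?case by simp
next
  case (add n F G)
  have "wdeg_le w (n - 1) (\<lambda>x y s t. (F (x + a) (y + b) (s + c) (t + d) - F x y s t)
      + (G (x + a) (y + b) (s + c) (t + d) - G x y s t))"
    by (rule wdeg_le.add) (use add in auto)
  then show ?case by (rule wdeg_le_cong) (simp add: algebra_simps)
next
  case (Suc n F)
  show ?case by (rule wdeg_le_mono[OF Suc.IH[OF Suc.prems]]) auto
qed

lemma wdeg_le_times_diff:
  assumes F: "wdeg_le w n F" and side: "w = 0 \<Longrightarrow> a = 0 \<and> c = 0"
    and u_mult: "\<And>k G. wdeg_le w k G \<Longrightarrow> wdeg_le w (Suc k) (\<lambda>x y s t. u x y s t * G x y s t)"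
  shows "wdeg_le w n (\<lambda>x y s t. u x y s t * (F (x + a) (y + b) (s + c) (t + d) - F x y s t))"
proof (cases "n = 0")
  case True
  then show ?thesis
    using wdeg_le_0_translate_invariant[OF F[unfolded True] side]
    by (intro wdeg_le_cong[OF wdeg_le.const[of w _ 0]]) simp
next
  case False
  then show ?thesis using u_mult[OF wdeg_le_diff[OF F side]] by simp
qed

section \<open>The tensor product module\<close>

lemma tensor_act_simps:
  fixes lam1 eta1 sig1 lam2 eta2 sig2 :: complex
  defines "act \<equiv> tensor_act (omegaI lam1 eta1 sig1) (omegaJ lam2 eta2 sig2)"
  shows "act (L m) F x y s t = lam1 powi m * (y - of_int m * x + of_int m * eta1) * F x (y - of_int m) s t
           + lam2 powi m * (t + of_int m * s + of_int m * eta2) * F x y s (t - of_int m)"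
    and "act (H m) F x y s t = lam1 powi m * x * F x (y - of_int m) s t + lam2 powi m * s * F x y s (t - of_int m)"
    and "act (I m) F x y s t = lam1 powi m * sig1 * F (x - 1) (y - of_int m) s t"
    and "act (J m) F x y s t = lam2 powi m * sig2 * F x y (s + 1) (t - of_int m)"
  by (simp_all add: act_def tensor_act_def)

lemma poly4_act_closed:
  assumes "F \<in> poly4"
  shows "tensor_act (omegaI lam1 eta1 sig1) (omegaJ lam2 eta2 sig2) g F \<in> poly4"
proof -
  have F: "polyfun4 F" using assms poly4_iff_polyfun4 by blast
  have "polyfun4 (\<lambda>x y s t. tensor_act (omegaI lam1 eta1 sig1) (omegaJ lam2 eta2 sig2) g F x y s t)"
  proof (cases g)
    case (L m)
    have "polyfun4 (\<lambda>x y s t.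
        (lam1 powi m * y + (- (lam1 powi m * of_int m)) * x + lam1 powi m * of_int m * eta1)
          * F (x + 0) (y + - of_int m) (s + 0) (t + 0)
      + (lam2 powi m * t + lam2 powi m * of_int m * s + lam2 powi m * of_int m * eta2)
          * F (x + 0) (y + 0) (s + 0) (t + - of_int m))"
      by (intro polyfun4.add polyfun4_times_translate polyfun4.mult F
          polyfun4.const polyfun4.var_x polyfun4.var_y polyfun4.var_s polyfun4.var_t)
    then show ?thesis by (simp add: L tensor_act_simps algebra_simps)
  next
    case (H m)
    have "polyfun4 (\<lambda>x y s t. (lam1 powi m * x) * F (x + 0) (y + - of_int m) (s + 0) (t + 0)
      + (lam2 powi m * s) * F (x + 0) (y + 0) (s + 0) (t + - of_int m))"
      by (intro polyfun4.add polyfun4_times_translate polyfun4.mult F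
          polyfun4.const polyfun4.var_x polyfun4.var_s)
    then show ?thesis by (simp add: H tensor_act_simps algebra_simps)
  next
    case (I m)
    have "polyfun4 (\<lambda>x y s t. (lam1 powi m * sig1) * F (x + - 1) (y + - of_int m) (s + 0) (t + 0))"
      by (intro polyfun4_times_translate polyfun4.const F)
    then show ?thesis by (simp add: I tensor_act_simps)
  next
    case (J m)
    have "polyfun4 (\<lambda>x y s t. (lam2 powi m * sig2) * F (x + 0) (y + 0) (s + 1) (t + - of_int m))"
      by (intro polyfun4_times_translate polyfun4.const F)
    then show ?thesis by (simp add: J tensor_act_simps)
  qed
  then show ?thesis by (simp add: poly4_iff_polyfun4)
qed

text \<open>The translations effected, up to nonzero scalars, by \<open>I\<^sub>0, I\<^sub>1, J\<^sub>0, J\<^sub>1\<close>.\<close>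
definition IJ_translations :: "(complex \<times> complex \<times> complex \<times> complex) set" where
  "IJ_translations = {(-1, 0, 0, 0), (-1, -1, 0, 0), (0, 0, 1, 0), (0, 0, 1, -1)}"

lemma polyfun4_IJ_invariant_const:
  assumes "polyfun4 F"
    and inv: "\<And>a b c d x y s t. (a, b, c, d) \<in> IJ_translations \<Longrightarrow>
                F (x + a) (y + b) (s + c) (t + d) = F x y s t"
  shows "F x y s t = F 0 0 0 0"
proof (rule polyfun4_periodic_const[OF assms(1)])
  have x: "F (x - 1) y s t = F x y s t" and xy: "F (x - 1) (y - 1) s t = F x y s t"
    and s: "F x y (s + 1) t = F x y s t" and st: "F x y (s + 1) (t - 1) = F x y s t" for x y s t
    using inv[of "-1" 0 0 0] inv[of "-1" "-1" 0 0] inv[of 0 0 1 0] inv[of 0 0 1 "-1"]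
    by (simp_all add: IJ_translations_def)
  show px: "F (x + 1) y s t = F x y s t" for x y s t
    using x[of "x + 1"] by simp
  show "F x (y + 1) s t = F x y s t" for x y s t
    using xy[of "x + 1" "y + 1"] px[of x "y + 1"] by simp
  show "F x y (s + 1) t = F x y s t" for x y s t
    by (rule s)
  show "F x y s (t + 1) = F x y s t" for x y s t
    using st[of x y "s - 1" "t + 1"] s[of x y "s - 1" "t + 1"] by simp
qed

section \<open>Submodules\<close>

locale tensor_submodule =
  fixes W :: "fun4 set" and lam1 eta1 sig1 lam2 eta2 sig2 :: complex
  assumes subspace: "csubspace4 W"
    and act_closed: "\<And>g F. F \<in> W \<Longrightarrow> tensor_act (omegaI lam1 eta1 sig1) (omegaJ lam2 eta2 sig2) g F \<in> W"
    and lam1_nonzero: "lam1 \<noteq> 0" and lam2_nonzero: "lam2 \<noteq> 0"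
    and sig1_nonzero: "sig1 \<noteq> 0" and sig2_nonzero: "sig2 \<noteq> 0"
begin

abbreviation act :: "gca \<Rightarrow> fun4 \<Rightarrow> fun4" where
  "act \<equiv> tensor_act (omegaI lam1 eta1 sig1) (omegaJ lam2 eta2 sig2)"

lemma zero_mem: "(\<lambda>x y s t. 0) \<in> W"
  using subspace by (simp add: csubspace4_def)

lemma add_mem: "F \<in> W \<Longrightarrow> G \<in> W \<Longrightarrow> (\<lambda>x y s t. F x y s t + G x y s t) \<in> W"
  using subspace by (simp add: csubspace4_def)

lemma scale_mem: "F \<in> W \<Longrightarrow> (\<lambda>x y s t. c * F x y s t) \<in> W"
  using subspace by (simp add: csubspace4_def)

lemma mem_cong: "F \<in> W \<Longrightarrow> (\<And>x y s t. F x y s t = G x y s t) \<Longrightarrow> G \<in> W"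
proof -
  assume "F \<in> W" and "\<And>x y s t. F x y s t = G x y s t"
  then show ?thesis by (metis ext)
qed

lemma lincomb_mem:
  "(\<And>c G. (c, G) \<in> set cs \<Longrightarrow> G \<in> W) \<Longrightarrow> (\<lambda>x y s t. \<Sum>(c, G)\<leftarrow>cs. c * G x y s t) \<in> W"
proof (induction cs)
  case Nil
  show ?case using zero_mem by simp
next
  case (Cons cG cs)
  obtain c G where [simp]: "cG = (c, G)" by fastforce
  have "(\<lambda>x y s t. c * G x y s t + (\<Sum>(c, G)\<leftarrow>cs. c * G x y s t)) \<in> W"
    using Cons by (intro add_mem scale_mem) auto
  then show ?case by simp
qed

lemma translate_mem:
  assumes F: "F \<in> W" and "(a, b, c, d) \<in> IJ_translations"
  shows "(\<lambda>x y s t. F (x + a) (y + b) (s + c) (t + d)) \<in> W"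
proof -
  have I: "(\<lambda>x y s t. F (x - 1) (y - of_int m) s t) \<in> W" for m
    by (rule mem_cong[OF scale_mem[OF act_closed[OF F, of "I m"]], of "1 / (lam1 powi m * sig1)"])
       (simp add: tensor_act_simps lam1_nonzero sig1_nonzero)
  have J: "(\<lambda>x y s t. F x y (s + 1) (t - of_int m)) \<in> W" for m
    by (rule mem_cong[OF scale_mem[OF act_closed[OF F, of "J m"]], of "1 / (lam2 powi m * sig2)"])
       (simp add: tensor_act_simps lam2_nonzero sig2_nonzero)
  show ?thesis
    using assms(2) I[of 0] I[of 1] J[of 0] J[of 1] by (auto simp: IJ_translations_def)
qed

lemma one_mem_if_nonzero_mem:
  "wdeg_le 1 n F \<Longrightarrow> F \<in> W \<Longrightarrow> F \<noteq> (\<lambda>x y s t. 0) \<Longrightarrow> (\<lambda>x y s t. 1) \<in> W"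
proof (induction n arbitrary: F rule: less_induct)
  case (less n F)
  note F_deg = less.prems(1) and F_mem = less.prems(2) and F_nonzero = less.prems(3)
  show ?case
  proof (cases "\<exists>(a, b, c, d) \<in> IJ_translations.
      (\<lambda>x y s t. F (x + a) (y + b) (s + c) (t + d) - F x y s t) \<noteq> (\<lambda>x y s t. 0)")
    case True
    then obtain a b c d where v: "(a, b, c, d) \<in> IJ_translations"
      and diff_nonzero: "(\<lambda>x y s t. F (x + a) (y + b) (s + c) (t + d) - F x y s t) \<noteq> (\<lambda>x y s t. 0)"
      by blast
    have "n \<noteq> 0"
    proof
      assume "n = 0"
      have "F (x + a) (y + b) (s + c) (t + d) = F x y s t" for x y s t
        by (rule wdeg_le_0_translate_invariant[OF F_deg[unfolded \<open>n = 0\<close>]]) simp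
      then show False using diff_nonzero by simp
    qed
    have diff_mem: "(\<lambda>x y s t. F (x + a) (y + b) (s + c) (t + d) - F x y s t) \<in> W"
      by (rule mem_cong[OF add_mem[OF translate_mem[OF F_mem v] scale_mem[OF F_mem, of "-1"]]]) simp
    have diff_deg: "wdeg_le 1 (n - 1) (\<lambda>x y s t. F (x + a) (y + b) (s + c) (t + d) - F x y s t)"
      by (rule wdeg_le_diff[OF F_deg]) simp
    show ?thesis
      by (rule less.IH[OF _ diff_deg diff_mem diff_nonzero]) (use \<open>n \<noteq> 0\<close> in simp)
  next
    case False
    then have "F (x + a) (y + b) (s + c) (t + d) = F x y s t"
      if "(a, b, c, d) \<in> IJ_translations" for a b c d x y s t
      using that by (fastforce simp: fun_eq_iff)
    then have F_const: "F x y s t = F 0 0 0 0" for x y s t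
      using polyfun4_IJ_invariant_const[OF wdeg_le_imp_polyfun4[OF F_deg]] by blast
    have "F 0 0 0 0 \<noteq> 0"
    proof
      assume "F 0 0 0 0 = 0"
      then have "F x y s t = 0" for x y s t
        using F_const[of x y s t] by simp
      then have "F = (\<lambda>x y s t. 0)"
        by (intro ext)
      then show False using F_nonzero by contradiction
    qed
    then have "1 / F 0 0 0 0 * F x y s t = 1" for x y s t
      using F_const[of x y s t] by simp
    then show ?thesis
      by (intro mem_cong[OF scale_mem[OF F_mem]])
  qed
qed

lemma times_diff_mem:
  assumes F: "wdeg_le 0 n F" and lower: "\<And>k G. k < n \<Longrightarrow> wdeg_le 0 k G \<Longrightarrow> G \<in> W"
    and u_mult: "\<And>k G. wdeg_le 0 k G \<Longrightarrow> wdeg_le 0 k (\<lambda>x y s t. u x y s t * G x y s t)"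
  shows "(\<lambda>x y s t. u x y s t * (F x (y + b) s (t + d) - F x y s t)) \<in> W"
proof (cases "n = 0")
  case True
  have "F x (y + b) s (t + d) = F x y s t" for x y s t
    using wdeg_le_0_translate_invariant[OF F[unfolded True], of 0 0 x y b s t d] by simp
  then show ?thesis by (intro mem_cong[OF zero_mem]) simp
next
  case False
  have "wdeg_le 0 (n - 1) (\<lambda>x y s t. u x y s t * (F (x + 0) (y + b) (s + 0) (t + d) - F x y s t))"
    by (rule u_mult[OF wdeg_le_diff[OF F]]) simp
  then show ?thesis using lower[of "n - 1"] False by simp
qed

end

locale distinct_tensor_submodule = tensor_submodule +
  assumes lam_distinct: "lam1 \<noteq> lam2"
begin

text \<open>\<open>(H\<^sub>1 - \<lambda>\<^sub>2 H\<^sub>0) F = (\<lambda>\<^sub>1 - \<lambda>\<^sub>2) x F + \<lambda>\<^sub>1 x (F(y - 1) - F) + \<lambda>\<^sub>2 s (F(t - 1) - F)\<close>,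
  and the last two terms have lower degree in \<open>y, t\<close> than \<open>F\<close>.\<close>
lemma times_x_s_mem:
  assumes F: "wdeg_le 0 n F" "F \<in> W" and lower: "\<And>k G. k < n \<Longrightarrow> wdeg_le 0 k G \<Longrightarrow> G \<in> W"
  shows "(\<lambda>x y s t. x * F x y s t) \<in> W" and "(\<lambda>x y s t. s * F x y s t) \<in> W"
proof -
  have ex: "(\<lambda>x y s t. x * (F x (y - 1) s t - F x y s t)) \<in> W"
    using times_diff_mem[OF F(1) lower wdeg_le.times_x[where w = 0, simplified], where b = "-1" and d = 0] by simp
  have es: "(\<lambda>x y s t. s * (F x y s (t - 1) - F x y s t)) \<in> W"
    using times_diff_mem[OF F(1) lower wdeg_le.times_s[where w = 0, simplified], where b = 0 and d = "-1"] by simp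
  have "(\<lambda>x y s t. \<Sum>(c, G)\<leftarrow>[(1, act (H 1) F), (- lam2, act (H 0) F),
      (- lam1, \<lambda>x y s t. x * (F x (y - 1) s t - F x y s t)),
      (- lam2, \<lambda>x y s t. s * (F x y s (t - 1) - F x y s t))]. c * G x y s t) \<in> W"
    using act_closed[OF F(2)] ex es by (intro lincomb_mem) auto
  then have "(\<lambda>x y s t. (lam1 - lam2) * (x * F x y s t)) \<in> W"
    by (rule mem_cong) (simp add: tensor_act_simps algebra_simps)
  from scale_mem[OF this, of "1 / (lam1 - lam2)"]
  show x: "(\<lambda>x y s t. x * F x y s t) \<in> W"
    using lam_distinct by simp
  show "(\<lambda>x y s t. s * F x y s t) \<in> W"
    by (rule mem_cong[OF add_mem[OF act_closed[OF F(2), of "H 0"] scale_mem[OF x, of "-1"]]])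
       (simp add: tensor_act_simps algebra_simps)
qed

text \<open>Likewise \<open>(L\<^sub>1 - \<lambda>\<^sub>2 L\<^sub>0) F = (\<lambda>\<^sub>1 - \<lambda>\<^sub>2) y F\<close> plus terms of degree in \<open>y, t\<close> at most that of \<open>F\<close>.\<close>
lemma times_y_t_mem:
  assumes F: "wdeg_le 0 n F" and lower: "\<And>G. wdeg_le 0 n G \<Longrightarrow> G \<in> W"
  shows "(\<lambda>x y s t. y * F x y s t) \<in> W" and "(\<lambda>x y s t. t * F x y s t) \<in> W"
proof -
  have F_y: "wdeg_le 0 n (\<lambda>x y s t. F x (y - 1) s t)" and F_t: "wdeg_le 0 n (\<lambda>x y s t. F x y s (t - 1))"
    using wdeg_le_translate[OF F, of 0 "-1" 0 0] wdeg_le_translate[OF F, of 0 0 0 "-1"] by simp_all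
  have ey: "(\<lambda>x y s t. y * (F x (y - 1) s t - F x y s t)) \<in> W"
    using lower[OF wdeg_le_times_diff[OF F _ wdeg_le.times_y, where b = "-1" and a = 0 and c = 0 and d = 0]]
    by simp
  have et: "(\<lambda>x y s t. t * (F x y s (t - 1) - F x y s t)) \<in> W"
    using lower[OF wdeg_le_times_diff[OF F _ wdeg_le.times_t, where d = "-1" and a = 0 and b = 0 and c = 0]]
    by simp
  have ex: "(\<lambda>x y s t. (eta1 - x) * F x (y - 1) s t) \<in> W"
    by (rule mem_cong[OF lower[OF wdeg_le.add[OF wdeg_le_scale[OF F_y, of eta1]
          wdeg_le_scale[OF wdeg_le.times_x[OF F_y], of "-1", simplified]]]])
       (simp add: algebra_simps)
  have es: "(\<lambda>x y s t. (s + eta2) * F x y s (t - 1)) \<in> W"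
    by (rule mem_cong[OF lower[OF wdeg_le.add[OF wdeg_le_scale[OF F_t, of eta2]
          wdeg_le.times_s[OF F_t, simplified]]]])
       (simp add: algebra_simps)
  have "(\<lambda>x y s t. \<Sum>(c, G)\<leftarrow>[(1, act (L 1) F), (- lam2, act (L 0) F),
      (- lam1, \<lambda>x y s t. y * (F x (y - 1) s t - F x y s t)),
      (- lam2, \<lambda>x y s t. t * (F x y s (t - 1) - F x y s t)),
      (- lam1, \<lambda>x y s t. (eta1 - x) * F x (y - 1) s t),
      (- lam2, \<lambda>x y s t. (s + eta2) * F x y s (t - 1))]. c * G x y s t) \<in> W"
    using act_closed[OF lower[OF F]] ey et ex es by (intro lincomb_mem) auto
  then have "(\<lambda>x y s t. (lam1 - lam2) * (y * F x y s t)) \<in> W"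
    by (rule mem_cong) (simp add: tensor_act_simps algebra_simps)
  from scale_mem[OF this, of "1 / (lam1 - lam2)"]
  show y: "(\<lambda>x y s t. y * F x y s t) \<in> W"
    using lam_distinct by simp
  show "(\<lambda>x y s t. t * F x y s t) \<in> W"
    by (rule mem_cong[OF add_mem[OF act_closed[OF lower[OF F], of "L 0"] scale_mem[OF y, of "-1"]]])
       (simp add: tensor_act_simps algebra_simps)
qed

lemma mem_if_lower_degree_mem:
  assumes one: "(\<lambda>x y s t. 1) \<in> W"
  shows "wdeg_le 0 n F \<Longrightarrow> (\<And>k G. k < n \<Longrightarrow> wdeg_le 0 k G \<Longrightarrow> G \<in> W) \<Longrightarrow> F \<in> W"
proof (induction rule: wdeg_le.induct)
  case (const n c)
  show ?case by (rule mem_cong[OF scale_mem[OF one, of c]]) simp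
next
  case (times_x n F)
  then show ?case using times_x_s_mem(1)[OF times_x.hyps] by simp
next
  case (times_s n F)
  then show ?case using times_x_s_mem(2)[OF times_s.hyps] by simp
next
  case (times_y n F)
  show ?case by (rule times_y_t_mem(1)[OF times_y.hyps times_y.prems[OF lessI]])
next
  case (times_t n F)
  show ?case by (rule times_y_t_mem(2)[OF times_t.hyps times_t.prems[OF lessI]])
next
  case (add n F G)
  show ?case by (rule add_mem[OF add.IH(1)[OF add.prems] add.IH(2)[OF add.prems]])
next
  case (Suc n F)
  show ?case by (rule Suc.prems[OF lessI Suc.hyps])
qed

lemma poly4_subset_if_one_mem:
  assumes "(\<lambda>x y s t. 1) \<in> W"
  shows "poly4 \<subseteq> W"
proof
  fix F assume "F \<in> poly4"
  then obtain n where "wdeg_le 0 n F"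
    using polyfun4_imp_wdeg_le poly4_iff_polyfun4 by blast
  moreover have "wdeg_le 0 n F \<Longrightarrow> F \<in> W" for n F
    by (induction n arbitrary: F rule: less_induct) (rule mem_if_lower_degree_mem[OF assms])
  ultimately show "F \<in> W" by blast
qed

end

lemma tensor_act_depends_on_y_plus_t:
  assumes F: "\<And>x y s t. F x y s t = F x 0 s (y + t)"
  shows "tensor_act (omegaI lam eta1 sig1) (omegaJ lam eta2 sig2) g F x y s t
       = tensor_act (omegaI lam eta1 sig1) (omegaJ lam eta2 sig2) g F x 0 s (y + t)"
proof -
  define G where "G x s u = F x 0 s u" for x s u
  have "F = (\<lambda>x y s t. G x s (y + t))"
    using F by (auto simp: G_def)
  then show ?thesis
    by (cases g) (simp_all add: tensor_act_simps algebra_simps)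
qed

lemma poly4_nonzero: "poly4 \<noteq> {\<lambda>x y s t. 0}"
proof
  assume "poly4 = {\<lambda>x y s t. 0}"
  then have "(\<lambda>x y s t. 1 :: complex) = (\<lambda>x y s t. 0)"
    using polyfun4_imp_poly4[OF polyfun4.const[of 1]] by (metis singletonD)
  then show False by (metis one_neq_zero)
qed

text \<open>For \<open>\<lambda>\<^sub>1 = \<lambda>\<^sub>2\<close> the polynomials in \<open>x, s, y + t\<close> form a proper nonzero submodule.\<close>
lemma not_irreducible_if_lam_eq:
  "\<not> irreducible_mod4 poly4 (tensor_act (omegaI lam eta1 sig1) (omegaJ lam eta2 sig2))"
proof
  let ?act = "tensor_act (omegaI lam eta1 sig1) (omegaJ lam eta2 sig2)"
  define U where "U = {F \<in> poly4. \<forall>x y s t. F x y s t = F x 0 s (y + t)}"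
  assume "irreducible_mod4 poly4 ?act"
  moreover have "U \<subseteq> poly4"
    unfolding U_def by blast
  moreover have "csubspace4 U"
    unfolding csubspace4_def U_def
    by (auto intro: polyfun4_imp_poly4[OF polyfun4.const] poly4_add
        poly4_mult[OF polyfun4_imp_poly4[OF polyfun4.const]])
  moreover have "\<forall>g. \<forall>F\<in>U. ?act g F \<in> U"
  proof (intro allI ballI)
    fix g F
    assume "F \<in> U"
    then have F: "F \<in> poly4" and inv: "\<And>x y s t. F x y s t = F x 0 s (y + t)"
      by (auto simp: U_def)
    show "?act g F \<in> U"
      unfolding U_def using poly4_act_closed[OF F] tensor_act_depends_on_y_plus_t[where F = F, OF inv] by blast
  qed
  ultimately have "U = {\<lambda>x y s t. 0} \<or> U = poly4"
    unfolding irreducible_mod4_def by blast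
  moreover have "(\<lambda>x y s t. 1) \<in> U"
    unfolding U_def using polyfun4_imp_poly4[OF polyfun4.const] by simp
  moreover have "(\<lambda>x y s t. y) \<in> poly4 - U"
    unfolding U_def using polyfun4_imp_poly4[OF polyfun4.var_y] by (auto intro: exI[of _ 1])
  ultimately show False
    by (metis Diff_iff singletonD one_neq_zero)
qed

lemma irreducible_if_lam_neq:
  assumes "lam1 \<noteq> 0" and "lam2 \<noteq> 0" and "sig1 \<noteq> 0" and "sig2 \<noteq> 0" and "lam1 \<noteq> lam2"
  shows "irreducible_mod4 poly4 (tensor_act (omegaI lam1 eta1 sig1) (omegaJ lam2 eta2 sig2))"
  unfolding irreducible_mod4_def
proof (intro conjI allI impI poly4_nonzero)
  fix W
  assume "W \<subseteq> poly4 \<and> csubspace4 W \<and>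
    (\<forall>g. \<forall>F\<in>W. tensor_act (omegaI lam1 eta1 sig1) (omegaJ lam2 eta2 sig2) g F \<in> W)"
  then have "W \<subseteq> poly4" and "distinct_tensor_submodule W lam1 eta1 sig1 lam2 eta2 sig2"
    using assms by (auto simp: distinct_tensor_submodule_def tensor_submodule_def
        distinct_tensor_submodule_axioms_def)
  then interpret distinct_tensor_submodule W lam1 eta1 sig1 lam2 eta2 sig2
    by simp
  show "W = {\<lambda>x y s t. 0} \<or> W = poly4"
  proof (cases "W \<subseteq> {\<lambda>x y s t. 0}")
    case True
    then show ?thesis using zero_mem by blast
  next
    case False
    then obtain F where "F \<in> W" and "F \<noteq> (\<lambda>x y s t. 0)" by blast
    moreover obtain n where "wdeg_le 1 n F"
      using \<open>F \<in> W\<close> \<open>W \<subseteq> poly4\<close> poly4_iff_polyfun4 polyfun4_imp_wdeg_le by blast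
    ultimately have "(\<lambda>x y s t. 1) \<in> W"
      using one_mem_if_nonzero_mem by blast
    then show ?thesis
      using poly4_subset_if_one_mem \<open>W \<subseteq> poly4\<close> by blast
  qed
qed

theorem theorem3p4:
  fixes lam1 lam2 sig1 sig2 eta1 eta2 :: complex
  assumes "lam1 \<noteq> 0" and "lam2 \<noteq> 0" and "sig1 \<noteq> 0" and "sig2 \<noteq> 0"
  shows "irreducible_mod4 poly4 (tensor_act (omegaI lam1 eta1 sig1) (omegaJ lam2 eta2 sig2))
           \<longleftrightarrow> lam1 \<noteq> lam2"
  using irreducible_if_lam_neq[OF assms] not_irreducible_if_lam_eq by blast

end
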